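(* Let $\chi_i:\Sigma\to\Sigma_i$ ($i\in\{0,1\}$) be signature morphisms and $\{\chi'_i:\Sigma_i\to\Sigma'\}_{i\in\{0,1\}}$ a pushout (colimit) of $\chi_0,\chi_1$ in the category of signatures. Let $\mathfrak{A}_i$ be a $\mathsf{TA}_k$ $\Sigma_i$-model for $i\in\{0,1\}$. Then the following are equivalent: (a) $\mathfrak{A}_0\upharpoonright_{\chi_0}=\mathfrak{A}_1\upharpoonright_{\chi_1}$; (b) there is a $\mathsf{TA}_k$ $\Sigma'$-model $\mathfrak{A}'$ with $\mathfrak{A}'\upharpoonright_{\chi'_0}=\mathfrak{A}_0$ and $\mathfrak{A}'\upharpoonright_{\chi'_1}=\mathfrak{A}_1$.
   Context: A signature $\Sigma=(S,F,L)$ consists of a set $S$ of sorts, a family $F=(F_{w\to s})_{w\in S^*,s\in S}$ of function symbols and a family $L=(L_s)_{s\in S}$ of labels, all pairwise disjoint; a signature morphism maps sorts, function symbols (respecting arities) and labels ($L_s\to L'_{\chi(s)}$); pushouts are computed componentwise. A $\mathsf{TA}_k$ $\Sigma$-model $\mathfrak{A}$ is an $(S,F)$-algebra with a relation $\lambda^{\mathfrak{A}}\subseteq\mathfrak{A}_s\times\mathfrak{A}_s$ for each $\lambda\in L_s$, together with, for each $s\in S$, a set $\mathfrak{A}_{ss}$ of binary relations on $\mathfrak{A}_s$ that contains $\emptyset$, the identity and all $\lambda^{\mathfrak{A}}$ ($\lambda\in L_s$) and is closed under union, $(r,r')\mapsto r^c\cup r'$, composition and $(r,r')\mapsto r^{-1};r'$,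 and an operation $*_s:\mathfrak{A}_{ss}\to\mathfrak{A}_{ss}$ such that $(\mathfrak{A}_{ss};\emptyset,\cup,\mathrm{id},;,*_s)$ is a Kleene algebra. For $\chi:\Sigma\to\Sigma'$ and a $\Sigma'$-model $\mathfrak{A}'$, the reduct $\mathfrak{A}'\upharpoonright_\chi$ is the $\Sigma$-model with carriers $\mathfrak{A}'_{\chi(s)}$, $\sigma^{\mathfrak{A}'\upharpoonright_\chi}=\chi(\sigma)^{\mathfrak{A}'}$, $\lambda^{\mathfrak{A}'\upharpoonright_\chi}=\chi(\lambda)^{\mathfrak{A}'}$, relation sets $\mathfrak{A}'_{\chi(s)\chi(s)}$ and operations $*_{\chi(s)}$. *)

theory Defs
  imports Main
begin

text \<open>Sorts, function symbols and labels live in three separate types, so they are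
pairwise disjoint. Each function symbol carries its arity (w, s), i.e. the family
F_{w->s} is represented by the set of symbols with arity (w,s); each label carries
its sort, i.e. L_s is the set of labels with sort s.\<close>

record ('s, 'f, 'l) sig =
  sorts  :: "'s set"
  ops    :: "'f set"
  arity  :: "'f \<Rightarrow> 's list \<times> 's"
  labels :: "'l set"
  lsort  :: "'l \<Rightarrow> 's"

definition wf_sig :: "('s, 'f, 'l) sig \<Rightarrow> bool" where
  "wf_sig Sg \<longleftrightarrow>
     (\<forall>f\<in>ops Sg. set (fst (arity Sg f)) \<subseteq> sorts Sg \<and> snd (arity Sg f) \<in> sorts Sg) \<and>
     (\<forall>l\<in>labels Sg. lsort Sg l \<in> sorts Sg)"

record ('s1, 'f1, 'l1, 's2, 'f2, 'l2) morph =
  smap :: "'s1 \<Rightarrow> 's2"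
  fmap :: "'f1 \<Rightarrow> 'f2"
  lmap :: "'l1 \<Rightarrow> 'l2"

definition is_morph ::
  "('s1, 'f1, 'l1) sig \<Rightarrow> ('s2, 'f2, 'l2) sig \<Rightarrow> ('s1, 'f1, 'l1, 's2, 'f2, 'l2) morph \<Rightarrow> bool" where
  "is_morph Sg Sg' chi \<longleftrightarrow> wf_sig Sg \<and> wf_sig Sg' \<and>
     (\<forall>s\<in>sorts Sg. smap chi s \<in> sorts Sg') \<and>
     (\<forall>f\<in>ops Sg. fmap chi f \<in> ops Sg' \<and>
        arity Sg' (fmap chi f) = (map (smap chi) (fst (arity Sg f)), smap chi (snd (arity Sg f)))) \<and>
     (\<forall>l\<in>labels Sg. lmap chi l \<in> labels Sg' \<and> lsort Sg' (lmap chi l) = smap chi (lsort Sg l))"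

definition morph_comp ::
  "('s2, 'f2, 'l2, 's3, 'f3, 'l3) morph \<Rightarrow> ('s1, 'f1, 'l1, 's2, 'f2, 'l2) morph
   \<Rightarrow> ('s1, 'f1, 'l1, 's3, 'f3, 'l3) morph" where
  "morph_comp th chi = \<lparr>smap = smap th \<circ> smap chi, fmap = fmap th \<circ> fmap chi,
                         lmap = lmap th \<circ> lmap chi\<rparr>"

definition morph_eq_on ::
  "('s1, 'f1, 'l1) sig \<Rightarrow> ('s1, 'f1, 'l1, 's2, 'f2, 'l2) morph \<Rightarrow> ('s1, 'f1, 'l1, 's2, 'f2, 'l2) morph \<Rightarrow> bool" where
  "morph_eq_on Sg chi th \<longleftrightarrow>
     (\<forall>s\<in>sorts Sg. smap chi s = smap th s) \<and>
     (\<forall>f\<in>ops Sg. fmap chi f = fmap th f) \<and>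
     (\<forall>l\<in>labels Sg. lmap chi l = lmap th l)"

text \<open>The universal property is
tested against all signatures whose sorts/symbols/labels live in the types
('s0+'s1) set, ('f0+'f1) set, ('l0+'l1) set, which are large enough to contain the
canonical (componentwise) pushout; hence this is equivalent to being a pushout in the
category of all signatures.\<close>
definition is_pushout ::
  "('s, 'f, 'l) sig \<Rightarrow> ('s0, 'f0, 'l0) sig \<Rightarrow> ('s1, 'f1, 'l1) sig \<Rightarrow> ('s2, 'f2, 'l2) sig
   \<Rightarrow> ('s, 'f, 'l, 's0, 'f0, 'l0) morph \<Rightarrow> ('s, 'f, 'l, 's1, 'f1, 'l1) morph
   \<Rightarrow> ('s0, 'f0, 'l0, 's2, 'f2, 'l2) morph \<Rightarrow> ('s1, 'f1, 'l1, 's2, 'f2, 'l2) morph \<Rightarrow> bool" where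
  "is_pushout Sg Sg0 Sg1 Sg' chi0 chi1 chi0' chi1' \<longleftrightarrow>
     is_morph Sg Sg0 chi0 \<and> is_morph Sg Sg1 chi1 \<and>
     is_morph Sg0 Sg' chi0' \<and> is_morph Sg1 Sg' chi1' \<and>
     morph_eq_on Sg (morph_comp chi0' chi0) (morph_comp chi1' chi1) \<and>
     (\<forall>(Sg'' :: (('s0 + 's1) set, ('f0 + 'f1) set, ('l0 + 'l1) set) sig) th0 th1.
        is_morph Sg0 Sg'' th0 \<and> is_morph Sg1 Sg'' th1 \<and>
        morph_eq_on Sg (morph_comp th0 chi0) (morph_comp th1 chi1) \<longrightarrow>
        (\<exists>th. is_morph Sg' Sg'' th \<and>
              morph_eq_on Sg0 (morph_comp th chi0') th0 \<and>
              morph_eq_on Sg1 (morph_comp th chi1') th1 \<and>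
              (\<forall>th'. is_morph Sg' Sg'' th' \<and>
                     morph_eq_on Sg0 (morph_comp th' chi0') th0 \<and>
                     morph_eq_on Sg1 (morph_comp th' chi1') th1 \<longrightarrow>
                     morph_eq_on Sg' th th')))"

definition kleene_algebra_on ::
  "'a set \<Rightarrow> 'a \<Rightarrow> ('a \<Rightarrow> 'a \<Rightarrow> 'a) \<Rightarrow> 'a \<Rightarrow> ('a \<Rightarrow> 'a \<Rightarrow> 'a) \<Rightarrow> ('a \<Rightarrow> 'a) \<Rightarrow> bool" where
  "kleene_algebra_on K ze pl on tm star \<longleftrightarrow>
     ze \<in> K \<and> on \<in> K \<and>
     (\<forall>a\<in>K. \<forall>b\<in>K. pl a b \<in> K \<and> tm a b \<in> K) \<and>
     (\<forall>a\<in>K. star a \<in> K) \<and>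
     (\<forall>a\<in>K. \<forall>b\<in>K. \<forall>c\<in>K.
        pl (pl a b) c = pl a (pl b c) \<and>
        pl a b = pl b a \<and>
        pl a ze = a \<and>
        pl a a = a \<and>
        tm (tm a b) c = tm a (tm b c) \<and>
        tm on a = a \<and> tm a on = a \<and>
        tm a (pl b c) = pl (tm a b) (tm a c) \<and>
        tm (pl a b) c = pl (tm a c) (tm b c) \<and>
        tm ze a = ze \<and> tm a ze = ze) \<and>
     (\<forall>a\<in>K.
        pl (pl on (tm a (star a))) (star a) = star a \<and>
        pl (pl on (tm (star a) a)) (star a) = star a) \<and>
     (\<forall>a\<in>K. \<forall>b\<in>K. \<forall>x\<in>K.
        (pl (pl b (tm a x)) x = x \<longrightarrow> pl (tm (star a) b) x = x) \<and>
        (pl (pl b (tm x a)) x = x \<longrightarrow> pl (tm b (star a)) x = x))"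

text \<open>Models are normalised outside the signature (empty carriers / relation sets,
undefined operations), so that equality of models is HOL equality.\<close>

record ('s, 'f, 'l, 'u) model =
  car   :: "'s \<Rightarrow> 'u set"
  opi   :: "'f \<Rightarrow> 'u list \<Rightarrow> 'u"
  lrel  :: "'l \<Rightarrow> ('u \<times> 'u) set"
  rels  :: "'s \<Rightarrow> ('u \<times> 'u) set set"
  kstar :: "'s \<Rightarrow> ('u \<times> 'u) set \<Rightarrow> ('u \<times> 'u) set"

definition is_model :: "('s, 'f, 'l) sig \<Rightarrow> ('s, 'f, 'l, 'u) model \<Rightarrow> bool" where
  "is_model Sg A \<longleftrightarrow> wf_sig Sg \<and>
     (\<forall>s. s \<notin> sorts Sg \<longrightarrow> car A s = {} \<and> rels A s = {} \<and> kstar A s = (\<lambda>r. undefined)) \<and>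
     (\<forall>f xs. \<not> (f \<in> ops Sg \<and> list_all2 (\<lambda>x s. x \<in> car A s) xs (fst (arity Sg f)))
             \<longrightarrow> opi A f xs = undefined) \<and>
     (\<forall>f\<in>ops Sg. \<forall>xs. list_all2 (\<lambda>x s. x \<in> car A s) xs (fst (arity Sg f))
             \<longrightarrow> opi A f xs \<in> car A (snd (arity Sg f))) \<and>
     (\<forall>l. l \<notin> labels Sg \<longrightarrow> lrel A l = {}) \<and>
     (\<forall>l\<in>labels Sg. lrel A l \<subseteq> car A (lsort Sg l) \<times> car A (lsort Sg l)) \<and>
     (\<forall>s\<in>sorts Sg.
        rels A s \<subseteq> Pow (car A s \<times> car A s) \<and>
        {} \<in> rels A s \<and> Id_on (car A s) \<in> rels A s \<and>
        (\<forall>l\<in>labels Sg. lsort Sg l = s \<longrightarrow> lrel A l \<in> rels A s) \<and>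
        (\<forall>r\<in>rels A s. \<forall>r'\<in>rels A s.
           r \<union> r' \<in> rels A s \<and>
           ((car A s \<times> car A s) - r) \<union> r' \<in> rels A s \<and>
           r O r' \<in> rels A s \<and>
           (converse r) O r' \<in> rels A s) \<and>
        kleene_algebra_on (rels A s) {} (\<union>) (Id_on (car A s)) (O) (kstar A s) \<and>
        (\<forall>r. r \<notin> rels A s \<longrightarrow> kstar A s r = undefined))"

definition reduct ::
  "('s1, 'f1, 'l1) sig \<Rightarrow> ('s1, 'f1, 'l1, 's2, 'f2, 'l2) morph \<Rightarrow> ('s2, 'f2, 'l2, 'u) model
   \<Rightarrow> ('s1, 'f1, 'l1, 'u) model" where
  "reduct Sg chi A' =
     \<lparr> car = (\<lambda>s. if s \<in> sorts Sg then car A' (smap chi s) else {}),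
       opi = (\<lambda>f xs. if f \<in> ops Sg \<and> list_all2 (\<lambda>x s. x \<in> car A' (smap chi s)) xs (fst (arity Sg f))
                      then opi A' (fmap chi f) xs else undefined),
       lrel = (\<lambda>l. if l \<in> labels Sg then lrel A' (lmap chi l) else {}),
       rels = (\<lambda>s. if s \<in> sorts Sg then rels A' (smap chi s) else {}),
       kstar = (\<lambda>s r. if s \<in> sorts Sg \<and> r \<in> rels A' (smap chi s)
                      then kstar A' (smap chi s) r else undefined) \<rparr>"

end

(* Reducts are functorial and the pushout square commutes, so a common expansion has equal
   reducts along chi0 and chi1.  Conversely, glue A0 and A1 into a model of the coproduct
   signature Sg0 + Sg1 and transport it along the copairing of chi0' and chi1'.  This is well
   defined as soon as chi0' and chi1' identify only symbols that A0 and A1 interpret alike and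
   every operation symbol of Sg' comes from Sg0 or Sg1 (sorts outside the image get empty
   carriers, labels the empty relation).  Both facts follow from the universal property, tested
   against the signature of classes of equally interpreted symbols of Sg0 + Sg1: the equality of
   the reducts makes it a cocone, and the mediating morphism out of Sg' separates differently
   interpreted symbols.  After adding a fresh operation symbol to that quotient, an operation of
   Sg' outside the image could be sent either to its old class or to the fresh symbol,
   contradicting uniqueness. *)

theory Submission
  imports Defs
begin

section \<open>Signatures, models and reducts\<close>

lemma wf_sigD:
  assumes "wf_sig Sg"
  shows "f \<in> ops Sg \<Longrightarrow> set (fst (arity Sg f)) \<subseteq> sorts Sg"
    and "f \<in> ops Sg \<Longrightarrow> snd (arity Sg f) \<in> sorts Sg"
    and "l \<in> labels Sg \<Longrightarrow> lsort Sg l \<in> sorts Sg"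
  using assms unfolding wf_sig_def by blast+

lemma is_morphD:
  assumes "is_morph Sg Sg' chi"
  shows "wf_sig Sg" and "wf_sig Sg'"
    and "s \<in> sorts Sg \<Longrightarrow> smap chi s \<in> sorts Sg'"
    and "f \<in> ops Sg \<Longrightarrow> fmap chi f \<in> ops Sg'"
    and "f \<in> ops Sg \<Longrightarrow> arity Sg' (fmap chi f) = map_prod (map (smap chi)) (smap chi) (arity Sg f)"
    and "l \<in> labels Sg \<Longrightarrow> lmap chi l \<in> labels Sg'"
    and "l \<in> labels Sg \<Longrightarrow> lsort Sg' (lmap chi l) = smap chi (lsort Sg l)"
  using assms unfolding is_morph_def by (auto simp: map_prod_def split: prod.split)

lemma is_morph_comp:
  assumes "is_morph Sg Sg' chi" "is_morph Sg' Sg'' th"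
  shows "is_morph Sg Sg'' (morph_comp th chi)"
  using assms unfolding is_morph_def morph_comp_def by auto

lemma morph_comp_assoc:
  "morph_comp (morph_comp th chi) psi = morph_comp th (morph_comp chi psi)"
  by (simp add: morph_comp_def comp_assoc)

lemma morph_eq_on_sym: "morph_eq_on Sg chi th \<Longrightarrow> morph_eq_on Sg th chi"
  and morph_eq_on_trans: "morph_eq_on Sg chi th \<Longrightarrow> morph_eq_on Sg th psi \<Longrightarrow> morph_eq_on Sg chi psi"
  by (simp_all add: morph_eq_on_def)

lemma list_all2_cong_set:
  assumes "\<And>x y. y \<in> set ys \<Longrightarrow> P x y = Q x y"
  shows "list_all2 P xs ys = list_all2 Q xs ys"
  using assms by (induction xs arbitrary: ys) (auto simp: list_all2_Cons1)

definition relation_kleene_algebra ::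
  "'u set \<Rightarrow> ('u \<times> 'u) set set \<Rightarrow> (('u \<times> 'u) set \<Rightarrow> ('u \<times> 'u) set) \<Rightarrow> bool" where
  "relation_kleene_algebra C R star \<longleftrightarrow>
     R \<subseteq> Pow (C \<times> C) \<and> {} \<in> R \<and> Id_on C \<in> R \<and>
     (\<forall>r\<in>R. \<forall>r'\<in>R. r \<union> r' \<in> R \<and> ((C \<times> C) - r) \<union> r' \<in> R \<and> r O r' \<in> R \<and> converse r O r' \<in> R) \<and>
     kleene_algebra_on R {} (\<union>) (Id_on C) (O) star \<and>
     (\<forall>r. r \<notin> R \<longrightarrow> star r = undefined)"

lemma relation_kleene_algebra_empty:
  "relation_kleene_algebra {} {{}} (\<lambda>r. if r = {} then {} else undefined)"
  by (simp add: relation_kleene_algebra_def kleene_algebra_on_def)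

definition op_well_sorted :: "('s, 'f, 'l) sig \<Rightarrow> ('s, 'f, 'l, 'u) model \<Rightarrow> 'f \<Rightarrow> bool" where
  "op_well_sorted Sg A f \<longleftrightarrow>
     (\<forall>xs. if list_all2 (\<lambda>x s. x \<in> car A s) xs (fst (arity Sg f))
           then opi A f xs \<in> car A (snd (arity Sg f)) else opi A f xs = undefined)"

definition label_well_sorted :: "('s, 'f, 'l) sig \<Rightarrow> ('s, 'f, 'l, 'u) model \<Rightarrow> 'l \<Rightarrow> bool" where
  "label_well_sorted Sg A l \<longleftrightarrow>
     lrel A l \<in> rels A (lsort Sg l) \<and> lrel A l \<subseteq> car A (lsort Sg l) \<times> car A (lsort Sg l)"

lemma is_model_iff:
  "is_model Sg A \<longleftrightarrow> wf_sig Sg \<and>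
     (\<forall>s. s \<notin> sorts Sg \<longrightarrow> car A s = {} \<and> rels A s = {} \<and> kstar A s = (\<lambda>r. undefined)) \<and>
     (\<forall>s\<in>sorts Sg. relation_kleene_algebra (car A s) (rels A s) (kstar A s)) \<and>
     (\<forall>f. f \<notin> ops Sg \<longrightarrow> opi A f = (\<lambda>xs. undefined)) \<and>
     (\<forall>f\<in>ops Sg. op_well_sorted Sg A f) \<and>
     (\<forall>l. l \<notin> labels Sg \<longrightarrow> lrel A l = {}) \<and>
     (\<forall>l\<in>labels Sg. label_well_sorted Sg A l)"
proof -
  let ?args = "\<lambda>f xs. list_all2 (\<lambda>x s. x \<in> car A s) xs (fst (arity Sg f))"
  let ?in_rels = "\<lambda>s. \<forall>l\<in>labels Sg. lsort Sg l = s \<longrightarrow> lrel A l \<in> rels A s"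
  have ops: "((\<forall>f xs. \<not> (f \<in> ops Sg \<and> ?args f xs) \<longrightarrow> opi A f xs = undefined) \<and>
      (\<forall>f\<in>ops Sg. \<forall>xs. ?args f xs \<longrightarrow> opi A f xs \<in> car A (snd (arity Sg f)))) \<longleftrightarrow>
    (\<forall>f. f \<notin> ops Sg \<longrightarrow> opi A f = (\<lambda>xs. undefined)) \<and> (\<forall>f\<in>ops Sg. op_well_sorted Sg A f)"
    by (auto simp: op_well_sorted_def fun_eq_iff)
  have labels: "wf_sig Sg \<Longrightarrow>
    ((\<forall>l\<in>labels Sg. lrel A l \<subseteq> car A (lsort Sg l) \<times> car A (lsort Sg l)) \<and> (\<forall>s\<in>sorts Sg. ?in_rels s)) \<longleftrightarrow>
    (\<forall>l\<in>labels Sg. label_well_sorted Sg A l)"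
    by (auto simp: label_well_sorted_def dest: wf_sigD(3))
  show ?thesis
    unfolding is_model_def relation_kleene_algebra_def
    using ops labels by (simp only: ball_conj_distrib) (smt (verit))
qed

definition agrees_along ::
  "('s1, 'f1, 'l1) sig \<Rightarrow> ('s1, 'f1, 'l1, 's2, 'f2, 'l2) morph \<Rightarrow> ('s2, 'f2, 'l2, 'u) model
   \<Rightarrow> ('s1, 'f1, 'l1, 'u) model \<Rightarrow> bool" where
  "agrees_along Sg chi A' A \<longleftrightarrow>
     (\<forall>s\<in>sorts Sg. car A' (smap chi s) = car A s \<and> rels A' (smap chi s) = rels A s \<and>
                   kstar A' (smap chi s) = kstar A s) \<and>
     (\<forall>f\<in>ops Sg. opi A' (fmap chi f) = opi A f) \<and>
     (\<forall>l\<in>labels Sg. lrel A' (lmap chi l) = lrel A l)"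

lemma list_all2_car_along:
  assumes "agrees_along Sg chi A' A" "set ss \<subseteq> sorts Sg"
  shows "list_all2 (\<lambda>x s. x \<in> car A' s) xs (map (smap chi) ss) = list_all2 (\<lambda>x s. x \<in> car A s) xs ss"
proof -
  have "\<forall>s\<in>set ss. car A' (smap chi s) = car A s" using assms by (auto simp: agrees_along_def)
  then show ?thesis by (induction ss arbitrary: xs) (auto simp: list_all2_Cons2)
qed

lemma agrees_along_reduct:
  assumes "is_model Sg' A'" "is_morph Sg Sg' chi"
  shows "agrees_along Sg chi A' (reduct Sg chi A')"
  unfolding agrees_along_def
proof (intro conjI ballI)
  fix s assume s: "s \<in> sorts Sg"
  then show "car A' (smap chi s) = car (reduct Sg chi A') s" "rels A' (smap chi s) = rels (reduct Sg chi A') s"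
    by (simp_all add: reduct_def)
  have "smap chi s \<in> sorts Sg'" using is_morphD(3)[OF assms(2) s] .
  then have "kstar A' (smap chi s) r = undefined" if "r \<notin> rels A' (smap chi s)" for r
    using assms(1) that unfolding is_model_iff relation_kleene_algebra_def by blast
  then show "kstar A' (smap chi s) = kstar (reduct Sg chi A') s"
    using s by (auto simp: reduct_def fun_eq_iff)
next
  fix f assume f: "f \<in> ops Sg"
  have "op_well_sorted Sg' A' (fmap chi f)"
    using assms is_morphD(4)[OF assms(2) f] unfolding is_model_iff by blast
  then show "opi A' (fmap chi f) = opi (reduct Sg chi A') f"
    using f by (auto simp: reduct_def fun_eq_iff op_well_sorted_def list_all2_map2 is_morphD(5)[OF assms(2)])
next
  fix l assume "l \<in> labels Sg"
  then show "lrel A' (lmap chi l) = lrel (reduct Sg chi A') l" by (simp add: reduct_def)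
qed

lemma reduct_eq_if_agrees_along:
  assumes "is_model Sg A" "agrees_along Sg chi A' A"
  shows "reduct Sg chi A' = A"
proof -
  have wf: "wf_sig Sg" using assms(1) by (simp add: is_model_iff)
  have A: "\<forall>s. s \<notin> sorts Sg \<longrightarrow> car A s = {} \<and> rels A s = {} \<and> kstar A s = (\<lambda>r. undefined)"
     "\<forall>s\<in>sorts Sg. relation_kleene_algebra (car A s) (rels A s) (kstar A s)"
     "\<forall>f. f \<notin> ops Sg \<longrightarrow> opi A f = (\<lambda>xs. undefined)"
     "\<forall>f\<in>ops Sg. op_well_sorted Sg A f"
     "\<forall>l. l \<notin> labels Sg \<longrightarrow> lrel A l = {}"
    using assms(1) unfolding is_model_iff by blast+
  have args: "list_all2 (\<lambda>x s. x \<in> car A' (smap chi s)) xs (fst (arity Sg f)) =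
      list_all2 (\<lambda>x s. x \<in> car A s) xs (fst (arity Sg f))" if "f \<in> ops Sg" for f xs
    using list_all2_car_along[OF assms(2) wf_sigD(1)[OF wf that]] by (simp add: list_all2_map2)
  show ?thesis
  proof (rule model.equality)
    show "car (reduct Sg chi A') = car A" "rels (reduct Sg chi A') = rels A"
      using A(1) assms(2) by (auto simp: reduct_def agrees_along_def fun_eq_iff)
    show "lrel (reduct Sg chi A') = lrel A"
      using A(5) assms(2) by (auto simp: reduct_def agrees_along_def fun_eq_iff)
    show "kstar (reduct Sg chi A') = kstar A"
      using A(1,2) assms(2) by (auto simp: reduct_def agrees_along_def fun_eq_iff relation_kleene_algebra_def)
    show "opi (reduct Sg chi A') = opi A"
    proof (intro ext)
      fix f xs
      show "opi (reduct Sg chi A') f xs = opi A f xs"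
      proof (cases "f \<in> ops Sg")
        case True
        then have "\<not> list_all2 (\<lambda>x s. x \<in> car A s) xs (fst (arity Sg f)) \<Longrightarrow> opi A f xs = undefined"
          using A(4) unfolding op_well_sorted_def by metis
        then show ?thesis
          using True assms(2) args[OF True] by (auto simp: reduct_def agrees_along_def)
      qed (use A(3) in \<open>simp add: reduct_def\<close>)
    qed
  qed simp
qed

lemma reduct_cong:
  assumes "wf_sig Sg" "morph_eq_on Sg chi th"
  shows "reduct Sg chi A = reduct Sg th A"
proof -
  have "list_all2 (\<lambda>x s. x \<in> car A (smap chi s)) xs (fst (arity Sg f)) =
      list_all2 (\<lambda>x s. x \<in> car A (smap th s)) xs (fst (arity Sg f))" if "f \<in> ops Sg" for f xs
    using wf_sigD(1)[OF assms(1) that] assms(2)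
    by (intro list_all2_cong_set) (auto simp: morph_eq_on_def)
  then show ?thesis using assms(2) unfolding reduct_def morph_eq_on_def by (auto simp: fun_eq_iff)
qed

lemma reduct_comp:
  assumes "is_morph Sg Sg0 chi"
  shows "reduct Sg chi (reduct Sg0 chi' A') = reduct Sg (morph_comp chi' chi) A'"
proof -
  note wf = wf_sigD(1)[OF is_morphD(1)[OF assms]] and sorts = is_morphD(3)[OF assms]
  have "list_all2 (\<lambda>x s. x \<in> (if s \<in> sorts Sg0 then car A' (smap chi' s) else {})) xs
        (fst (arity Sg0 (fmap chi f))) =
      list_all2 (\<lambda>x s. x \<in> car A' (smap chi' (smap chi s))) xs (fst (arity Sg f))"
    "list_all2 (\<lambda>x s. x \<in> (if smap chi s \<in> sorts Sg0 then car A' (smap chi' (smap chi s)) else {})) xs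
        (fst (arity Sg f)) =
      list_all2 (\<lambda>x s. x \<in> car A' (smap chi' (smap chi s))) xs (fst (arity Sg f))"
    if "f \<in> ops Sg" for f xs
    using wf[OF that] sorts
    by (auto simp: is_morphD(5)[OF assms that] list_all2_map2 intro!: list_all2_cong_set)
  then show ?thesis
    using is_morphD(3-6)[OF assms] unfolding reduct_def morph_comp_def
    by (auto simp: fun_eq_iff list_all2_map2)
qed

lemma op_well_sorted_along:
  assumes "is_morph Sg Sg' chi" "agrees_along Sg chi A' A" "f \<in> ops Sg" "op_well_sorted Sg A f"
  shows "op_well_sorted Sg' A' (fmap chi f)"
proof -
  have wf: "wf_sig Sg" using is_morphD(1)[OF assms(1)] .
  have "car A' (smap chi (snd (arity Sg f))) = car A (snd (arity Sg f))"
    using assms(2) wf_sigD(2)[OF wf assms(3)] by (simp add: agrees_along_def)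
  then show ?thesis
    using assms(2-4) list_all2_car_along[OF assms(2) wf_sigD(1)[OF wf assms(3)]]
    by (simp add: op_well_sorted_def agrees_along_def is_morphD(5)[OF assms(1,3)])
qed

lemma label_well_sorted_along:
  assumes "is_morph Sg Sg' chi" "agrees_along Sg chi A' A" "l \<in> labels Sg" "label_well_sorted Sg A l"
  shows "label_well_sorted Sg' A' (lmap chi l)"
  using assms wf_sigD(3)[OF is_morphD(1)[OF assms(1)] assms(3)]
  by (simp add: label_well_sorted_def agrees_along_def is_morphD(7)[OF assms(1,3)])

section \<open>Coproducts of signatures and models\<close>

definition sum_sig :: "('s0, 'f0, 'l0) sig \<Rightarrow> ('s1, 'f1, 'l1) sig \<Rightarrow> ('s0 + 's1, 'f0 + 'f1, 'l0 + 'l1) sig" where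
  "sum_sig Sg0 Sg1 =
     \<lparr>sorts = sorts Sg0 <+> sorts Sg1, ops = ops Sg0 <+> ops Sg1,
      arity = case_sum (map_prod (map Inl) Inl \<circ> arity Sg0) (map_prod (map Inr) Inr \<circ> arity Sg1),
      labels = labels Sg0 <+> labels Sg1, lsort = case_sum (Inl \<circ> lsort Sg0) (Inr \<circ> lsort Sg1)\<rparr>"

definition inl_morph :: "('s0, 'f0, 'l0, 's0 + 's1, 'f0 + 'f1, 'l0 + 'l1) morph" where
  "inl_morph = \<lparr>smap = Inl, fmap = Inl, lmap = Inl\<rparr>"

definition inr_morph :: "('s1, 'f1, 'l1, 's0 + 's1, 'f0 + 'f1, 'l0 + 'l1) morph" where
  "inr_morph = \<lparr>smap = Inr, fmap = Inr, lmap = Inr\<rparr>"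

definition copair_morph ::
  "('s0, 'f0, 'l0, 's2, 'f2, 'l2) morph \<Rightarrow> ('s1, 'f1, 'l1, 's2, 'f2, 'l2) morph
   \<Rightarrow> ('s0 + 's1, 'f0 + 'f1, 'l0 + 'l1, 's2, 'f2, 'l2) morph" where
  "copair_morph chi0 chi1 =
     \<lparr>smap = case_sum (smap chi0) (smap chi1), fmap = case_sum (fmap chi0) (fmap chi1),
      lmap = case_sum (lmap chi0) (lmap chi1)\<rparr>"

definition sum_model ::
  "('s0, 'f0, 'l0, 'u) model \<Rightarrow> ('s1, 'f1, 'l1, 'u) model \<Rightarrow> ('s0 + 's1, 'f0 + 'f1, 'l0 + 'l1, 'u) model" where
  "sum_model A0 A1 =
     \<lparr>car = case_sum (car A0) (car A1), opi = case_sum (opi A0) (opi A1),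
      lrel = case_sum (lrel A0) (lrel A1), rels = case_sum (rels A0) (rels A1),
      kstar = case_sum (kstar A0) (kstar A1)\<rparr>"

lemma wf_sum_sig: "wf_sig Sg0 \<Longrightarrow> wf_sig Sg1 \<Longrightarrow> wf_sig (sum_sig Sg0 Sg1)"
  unfolding wf_sig_def sum_sig_def by (auto simp: map_prod_def split_beta) blast+

lemma is_morph_inl: "wf_sig Sg0 \<Longrightarrow> wf_sig Sg1 \<Longrightarrow> is_morph Sg0 (sum_sig Sg0 Sg1) inl_morph"
  and is_morph_inr: "wf_sig Sg0 \<Longrightarrow> wf_sig Sg1 \<Longrightarrow> is_morph Sg1 (sum_sig Sg0 Sg1) inr_morph"
  using wf_sum_sig[of Sg0 Sg1]
  by (auto simp: is_morph_def inl_morph_def inr_morph_def sum_sig_def map_prod_def split_beta)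

lemma is_morph_copair:
  "is_morph Sg0 Sg' chi0 \<Longrightarrow> is_morph Sg1 Sg' chi1 \<Longrightarrow> is_morph (sum_sig Sg0 Sg1) Sg' (copair_morph chi0 chi1)"
  using wf_sum_sig[of Sg0 Sg1] unfolding is_morph_def
  by (auto simp: copair_morph_def sum_sig_def map_prod_def split_beta)

lemma copair_comp_inl: "morph_comp (copair_morph chi0 chi1) inl_morph = chi0"
  and copair_comp_inr: "morph_comp (copair_morph chi0 chi1) inr_morph = chi1"
  by (simp_all add: morph_comp_def copair_morph_def inl_morph_def inr_morph_def comp_def)

lemma morph_eq_on_sum_sig:
  "morph_eq_on (sum_sig Sg0 Sg1) th th' \<longleftrightarrow>
     morph_eq_on Sg0 (morph_comp th inl_morph) (morph_comp th' inl_morph) \<and>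
     morph_eq_on Sg1 (morph_comp th inr_morph) (morph_comp th' inr_morph)"
  by (auto simp: morph_eq_on_def morph_comp_def inl_morph_def inr_morph_def sum_sig_def)

lemma is_model_sum:
  assumes "is_model Sg0 A0" "is_model Sg1 A1"
  shows "is_model (sum_sig Sg0 Sg1) (sum_model A0 A1)"
proof -
  have "wf_sig (sum_sig Sg0 Sg1)" using assms by (simp add: is_model_iff wf_sum_sig)
  then show ?thesis
    using assms unfolding is_model_iff
    by (auto simp: sum_sig_def sum_model_def op_well_sorted_def label_well_sorted_def
        list_all2_map2 split: sum.split)
qed

lemma reduct_inl_sum_model: "is_model Sg0 A0 \<Longrightarrow> reduct Sg0 inl_morph (sum_model A0 A1) = A0"
  and reduct_inr_sum_model: "is_model Sg1 A1 \<Longrightarrow> reduct Sg1 inr_morph (sum_model A0 A1) = A1"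
  by (auto intro!: reduct_eq_if_agrees_along simp: agrees_along_def inl_morph_def inr_morph_def sum_model_def)

section \<open>Pushouts of signatures\<close>

locale sig_pushout =
  fixes Sg :: "('s, 'f, 'l) sig"
    and Sg0 :: "('s0, 'f0, 'l0) sig" and Sg1 :: "('s1, 'f1, 'l1) sig"
    and Sg' :: "('s2, 'f2, 'l2) sig"
    and chi0 :: "('s, 'f, 'l, 's0, 'f0, 'l0) morph"
    and chi1 :: "('s, 'f, 'l, 's1, 'f1, 'l1) morph"
    and chi0' :: "('s0, 'f0, 'l0, 's2, 'f2, 'l2) morph"
    and chi1' :: "('s1, 'f1, 'l1, 's2, 'f2, 'l2) morph"
  assumes pushout: "is_pushout Sg Sg0 Sg1 Sg' chi0 chi1 chi0' chi1'"
begin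

abbreviation "Sg_sum \<equiv> sum_sig Sg0 Sg1"
abbreviation "copair \<equiv> copair_morph chi0' chi1'"

lemma is_morph_chi: "is_morph Sg Sg0 chi0" "is_morph Sg Sg1 chi1" "is_morph Sg0 Sg' chi0'" "is_morph Sg1 Sg' chi1'"
  using pushout by (simp_all add: is_pushout_def)

lemma wf_sigs: "wf_sig Sg" "wf_sig Sg0" "wf_sig Sg1" "wf_sig Sg'"
  using is_morphD(1,2)[OF is_morph_chi(1)] is_morphD(2)[OF is_morph_chi(2)] is_morphD(2)[OF is_morph_chi(3)]
  by blast+

lemma wf_sig_Sg_sum: "wf_sig Sg_sum"
  using wf_sum_sig wf_sigs by blast

lemma is_morph_copair_pushout: "is_morph Sg_sum Sg' copair"
  using is_morph_copair[OF is_morph_chi(3,4)] .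

lemma reducts_of_expansion_agree:
  "reduct Sg chi0 (reduct Sg0 chi0' A') = reduct Sg chi1 (reduct Sg1 chi1' A')"
proof -
  have "morph_eq_on Sg (morph_comp chi0' chi0) (morph_comp chi1' chi1)"
    using pushout by (simp add: is_pushout_def)
  then show ?thesis
    using reduct_cong[OF wf_sigs(1)] by (simp add: reduct_comp[OF is_morph_chi(1)] reduct_comp[OF is_morph_chi(2)])
qed

context
  fixes T :: "(('s0 + 's1) set, ('f0 + 'f1) set, ('l0 + 'l1) set) sig"
    and q :: "('s0 + 's1, 'f0 + 'f1, 'l0 + 'l1, ('s0 + 's1) set, ('f0 + 'f1) set, ('l0 + 'l1) set) morph"
  assumes q: "is_morph Sg_sum T q"
    and q_compat: "morph_eq_on Sg (morph_comp q (morph_comp inl_morph chi0)) (morph_comp q (morph_comp inr_morph chi1))"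
begin

private lemma factors_iff:
  "morph_eq_on Sg_sum (morph_comp th copair) q \<longleftrightarrow>
     morph_eq_on Sg0 (morph_comp th chi0') (morph_comp q inl_morph) \<and>
     morph_eq_on Sg1 (morph_comp th chi1') (morph_comp q inr_morph)"
  by (simp add: morph_eq_on_sum_sig morph_comp_assoc copair_comp_inl copair_comp_inr)

private lemma universal_property:
  "\<exists>th. is_morph Sg' T th \<and> morph_eq_on Sg_sum (morph_comp th copair) q \<and>
     (\<forall>th'. is_morph Sg' T th' \<and> morph_eq_on Sg_sum (morph_comp th' copair) q \<longrightarrow> morph_eq_on Sg' th th')"
proof -
  have "is_morph Sg0 T (morph_comp q inl_morph)" "is_morph Sg1 T (morph_comp q inr_morph)"
    using is_morph_comp[OF is_morph_inl q] is_morph_comp[OF is_morph_inr q] wf_sigs by blast+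
  moreover have "morph_eq_on Sg (morph_comp (morph_comp q inl_morph) chi0) (morph_comp (morph_comp q inr_morph) chi1)"
    using q_compat by (simp add: morph_comp_assoc)
  ultimately show ?thesis
    using pushout unfolding is_pushout_def factors_iff by blast
qed

lemma factor_through_copair:
  obtains th where "is_morph Sg' T th" "morph_eq_on Sg_sum (morph_comp th copair) q"
  using universal_property by blast

lemma factor_through_copair_unique:
  assumes "is_morph Sg' T th" "morph_eq_on Sg_sum (morph_comp th copair) q"
    and "is_morph Sg' T th'" "morph_eq_on Sg_sum (morph_comp th' copair) q"
  shows "morph_eq_on Sg' th th'"
  using universal_property assms morph_eq_on_sym morph_eq_on_trans by metis

end

end

locale coloured_pushout = sig_pushout Sg Sg0 Sg1 Sg' chi0 chi1 chi0' chi1'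
  for Sg :: "('s, 'f, 'l) sig"
    and Sg0 :: "('s0, 'f0, 'l0) sig" and Sg1 :: "('s1, 'f1, 'l1) sig"
    and Sg' :: "('s2, 'f2, 'l2) sig"
    and chi0 :: "('s, 'f, 'l, 's0, 'f0, 'l0) morph"
    and chi1 :: "('s, 'f, 'l, 's1, 'f1, 'l1) morph"
    and chi0' :: "('s0, 'f0, 'l0, 's2, 'f2, 'l2) morph"
    and chi1' :: "('s1, 'f1, 'l1, 's2, 'f2, 'l2) morph" +
  fixes colS :: "'s0 + 's1 \<Rightarrow> 'c" and colF :: "'f0 + 'f1 \<Rightarrow> 'd" and colL :: "'l0 + 'l1 \<Rightarrow> 'e"
  assumes colS_compat: "s \<in> sorts Sg \<Longrightarrow> colS (Inl (smap chi0 s)) = colS (Inr (smap chi1 s))"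
    and colF_compat: "f \<in> ops Sg \<Longrightarrow> colF (Inl (fmap chi0 f)) = colF (Inr (fmap chi1 f))"
    and colL_compat: "l \<in> labels Sg \<Longrightarrow> colL (Inl (lmap chi0 l)) = colL (Inr (lmap chi1 l))"
begin

definition sort_class :: "'s0 + 's1 \<Rightarrow> ('s0 + 's1) set" where
  "sort_class x = {y \<in> sorts Sg_sum. colS y = colS x}"

definition class_arity :: "'f0 + 'f1 \<Rightarrow> ('s0 + 's1) set list \<times> ('s0 + 's1) set" where
  "class_arity x = map_prod (map sort_class) sort_class (arity Sg_sum x)"

definition op_class :: "'f0 + 'f1 \<Rightarrow> ('f0 + 'f1) set" where
  "op_class x = {y \<in> ops Sg_sum. colF y = colF x \<and> class_arity y = class_arity x}"

definition label_class :: "'l0 + 'l1 \<Rightarrow> ('l0 + 'l1) set" where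
  "label_class x = {y \<in> labels Sg_sum. colL y = colL x \<and> sort_class (lsort Sg_sum y) = sort_class (lsort Sg_sum x)}"

text \<open>The symbols of the quotient signature are sets of symbols of Sg0 + Sg1, so it lies in the
  type against which is_pushout tests the universal property.  No class is empty, hence the
  optional extra operation symbol {} is fresh.\<close>
definition quotient_sig ::
  "(('s0 + 's1) set list \<times> ('s0 + 's1) set) option \<Rightarrow> (('s0 + 's1) set, ('f0 + 'f1) set, ('l0 + 'l1) set) sig" where
  "quotient_sig E =
     \<lparr>sorts = sort_class ` sorts Sg_sum,
      ops = op_class ` ops Sg_sum \<union> (if E = None then {} else {{}}),
      arity = (\<lambda>c. if c = {} then the E else class_arity (SOME x. x \<in> c)),
      labels = label_class ` labels Sg_sum,
      lsort = (\<lambda>c. sort_class (lsort Sg_sum (SOME x. x \<in> c)))\<rparr>"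

definition quotient_morph ::
  "('s0 + 's1, 'f0 + 'f1, 'l0 + 'l1, ('s0 + 's1) set, ('f0 + 'f1) set, ('l0 + 'l1) set) morph" where
  "quotient_morph = \<lparr>smap = sort_class, fmap = op_class, lmap = label_class\<rparr>"

lemma sort_class_self: "x \<in> sorts Sg_sum \<Longrightarrow> x \<in> sort_class x"
  and op_class_self: "y \<in> ops Sg_sum \<Longrightarrow> y \<in> op_class y"
  and label_class_self: "z \<in> labels Sg_sum \<Longrightarrow> z \<in> label_class z"
  by (simp_all add: sort_class_def op_class_def label_class_def)

lemma sorts_quotient_sig: "sorts (quotient_sig E) = sort_class ` sorts Sg_sum"
  by (simp add: quotient_sig_def)

lemma arity_quotient_sig:
  assumes x: "x \<in> ops Sg_sum"
  shows "arity (quotient_sig E) (op_class x) = class_arity x"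
proof -
  have "(SOME y. y \<in> op_class x) \<in> op_class x" using op_class_self[OF x] by (rule someI)
  then show ?thesis using op_class_self[OF x] by (auto simp: quotient_sig_def op_class_def)
qed

lemma lsort_quotient_sig:
  assumes x: "x \<in> labels Sg_sum"
  shows "lsort (quotient_sig E) (label_class x) = sort_class (lsort Sg_sum x)"
proof -
  have "(SOME y. y \<in> label_class x) \<in> label_class x" using label_class_self[OF x] by (rule someI)
  then show ?thesis by (simp add: quotient_sig_def label_class_def)
qed

lemma wf_quotient_sig:
  assumes "pred_option (\<lambda>a. set (fst a) \<subseteq> sort_class ` sorts Sg_sum \<and> snd a \<in> sort_class ` sorts Sg_sum) E"
  shows "wf_sig (quotient_sig E)"
  unfolding wf_sig_def
proof
  show "\<forall>c\<in>ops (quotient_sig E). set (fst (arity (quotient_sig E) c)) \<subseteq> sorts (quotient_sig E) \<and>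
      snd (arity (quotient_sig E) c) \<in> sorts (quotient_sig E)"
  proof
    fix c assume "c \<in> ops (quotient_sig E)"
    then consider x where "x \<in> ops Sg_sum" "c = op_class x" | "c = {}" "E \<noteq> None"
      by (auto simp: quotient_sig_def split: if_splits)
    then show "set (fst (arity (quotient_sig E) c)) \<subseteq> sorts (quotient_sig E) \<and>
        snd (arity (quotient_sig E) c) \<in> sorts (quotient_sig E)"
    proof cases
      case 1
      then show ?thesis using wf_sigD(1,2)[OF wf_sig_Sg_sum 1(1)]
        by (auto simp: arity_quotient_sig sorts_quotient_sig class_arity_def map_prod_def split_beta)
    next
      case 2
      then show ?thesis using assms by (auto simp: quotient_sig_def)
    qed
  qed
  show "\<forall>c\<in>labels (quotient_sig E). lsort (quotient_sig E) c \<in> sorts (quotient_sig E)"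
  proof
    fix c assume "c \<in> labels (quotient_sig E)"
    then obtain x where "x \<in> labels Sg_sum" "c = label_class x" by (auto simp: quotient_sig_def)
    then show "lsort (quotient_sig E) c \<in> sorts (quotient_sig E)"
      using wf_sigD(3)[OF wf_sig_Sg_sum] by (simp add: lsort_quotient_sig sorts_quotient_sig)
  qed
qed

lemma is_morph_quotient:
  assumes "pred_option (\<lambda>a. set (fst a) \<subseteq> sort_class ` sorts Sg_sum \<and> snd a \<in> sort_class ` sorts Sg_sum) E"
  shows "is_morph Sg_sum (quotient_sig E) quotient_morph"
proof -
  have "wf_sig (quotient_sig E)" using wf_quotient_sig[OF assms] .
  moreover have "op_class ` ops Sg_sum \<subseteq> ops (quotient_sig E)" "labels (quotient_sig E) = label_class ` labels Sg_sum"
    by (auto simp: quotient_sig_def)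
  ultimately show ?thesis
    using wf_sig_Sg_sum unfolding is_morph_def
    by (auto simp: quotient_morph_def sorts_quotient_sig arity_quotient_sig lsort_quotient_sig class_arity_def
        map_prod_def split_beta)
qed

lemma quotient_morph_compat:
  "morph_eq_on Sg (morph_comp quotient_morph (morph_comp inl_morph chi0))
     (morph_comp quotient_morph (morph_comp inr_morph chi1))"
proof -
  have sorts: "sort_class (Inl (smap chi0 s)) = sort_class (Inr (smap chi1 s))" if "s \<in> sorts Sg" for s
    using colS_compat[OF that] by (simp add: sort_class_def)
  have "class_arity (Inl (fmap chi0 f)) = class_arity (Inr (fmap chi1 f))" if "f \<in> ops Sg" for f
    using sorts wf_sigD(1,2)[OF wf_sigs(1) that]
    by (auto simp: class_arity_def sum_sig_def is_morphD(5)[OF is_morph_chi(1) that]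
        is_morphD(5)[OF is_morph_chi(2) that] map_prod_def split_beta)
  then have ops: "op_class (Inl (fmap chi0 f)) = op_class (Inr (fmap chi1 f))" if "f \<in> ops Sg" for f
    using colF_compat[OF that] that by (simp add: op_class_def)
  have labels: "label_class (Inl (lmap chi0 l)) = label_class (Inr (lmap chi1 l))" if "l \<in> labels Sg" for l
    using colL_compat[OF that] sorts[OF wf_sigD(3)[OF wf_sigs(1) that]]
    by (simp add: label_class_def sum_sig_def is_morphD(7)[OF is_morph_chi(1) that] is_morphD(7)[OF is_morph_chi(2) that])
  show ?thesis
    using sorts ops labels
    by (simp add: morph_eq_on_def morph_comp_def quotient_morph_def inl_morph_def inr_morph_def)
qed


lemma quotient_factorisation:
  obtains th where "is_morph Sg' (quotient_sig None) th"
    "morph_eq_on Sg_sum (morph_comp th copair) quotient_morph"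
proof -
  have "is_morph Sg_sum (quotient_sig None) quotient_morph" by (rule is_morph_quotient) simp
  then show thesis using factor_through_copair[OF _ quotient_morph_compat] that by blast
qed

lemma colS_eq_if_copair_eq:
  assumes "x \<in> sorts Sg_sum" "y \<in> sorts Sg_sum" "smap copair x = smap copair y"
  shows "colS x = colS y"
proof -
  obtain th where "morph_eq_on Sg_sum (morph_comp th copair) quotient_morph"
    by (rule quotient_factorisation)
  then have "sort_class x = smap th (smap copair x)" "sort_class y = smap th (smap copair y)"
    using assms(1,2) by (simp_all add: morph_eq_on_def morph_comp_def quotient_morph_def)
  then have "sort_class x = sort_class y" using assms(3) by simp
  then have "y \<in> sort_class x" using sort_class_self[OF assms(2)] by simp
  then show ?thesis by (simp add: sort_class_def)
qed

lemma colF_eq_if_copair_eq: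
  assumes "x \<in> ops Sg_sum" "y \<in> ops Sg_sum" "fmap copair x = fmap copair y"
  shows "colF x = colF y"
proof -
  obtain th where "morph_eq_on Sg_sum (morph_comp th copair) quotient_morph"
    by (rule quotient_factorisation)
  then have "op_class x = fmap th (fmap copair x)" "op_class y = fmap th (fmap copair y)"
    using assms(1,2) by (simp_all add: morph_eq_on_def morph_comp_def quotient_morph_def)
  then have "op_class x = op_class y" using assms(3) by simp
  then have "y \<in> op_class x" using op_class_self[OF assms(2)] by simp
  then show ?thesis by (simp add: op_class_def)
qed

lemma colL_eq_if_copair_eq:
  assumes "x \<in> labels Sg_sum" "y \<in> labels Sg_sum" "lmap copair x = lmap copair y"
  shows "colL x = colL y"
proof -
  obtain th where "morph_eq_on Sg_sum (morph_comp th copair) quotient_morph"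
    by (rule quotient_factorisation)
  then have "label_class x = lmap th (lmap copair x)" "label_class y = lmap th (lmap copair y)"
    using assms(1,2) by (simp_all add: morph_eq_on_def morph_comp_def quotient_morph_def)
  then have "label_class x = label_class y" using assms(3) by simp
  then have "y \<in> label_class x" using label_class_self[OF assms(2)] by simp
  then show ?thesis by (simp add: label_class_def)
qed

lemma is_morph_quotient_sig_Some:
  assumes "is_morph S (quotient_sig None) th" "wf_sig (quotient_sig (Some a))"
  shows "is_morph S (quotient_sig (Some a)) th"
proof -
  have "arity (quotient_sig (Some a)) (fmap th f) = arity (quotient_sig None) (fmap th f)" if f: "f \<in> ops S" for f
  proof -
    obtain x where "x \<in> ops Sg_sum" "fmap th f = op_class x"
      using is_morphD(4)[OF assms(1) f] by (auto simp: quotient_sig_def)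
    then show ?thesis by (simp add: arity_quotient_sig)
  qed
  then show ?thesis
    using assms unfolding is_morph_def by (auto simp: quotient_sig_def)
qed

lemma ops_in_copair_image:
  assumes f': "f' \<in> ops Sg'"
  shows "f' \<in> fmap copair ` ops Sg_sum"
proof (rule ccontr)
  assume not_hit: "f' \<notin> fmap copair ` ops Sg_sum"
  obtain th where th: "is_morph Sg' (quotient_sig None) th"
    "morph_eq_on Sg_sum (morph_comp th copair) quotient_morph"
    by (rule quotient_factorisation)
  define a where "a = (map (smap th) (fst (arity Sg' f')), smap th (snd (arity Sg' f')))"
  have a: "pred_option (\<lambda>a. set (fst a) \<subseteq> sort_class ` sorts Sg_sum \<and> snd a \<in> sort_class ` sorts Sg_sum) (Some a)"
    using wf_sigD(1,2)[OF wf_sigs(4) f'] is_morphD(3)[OF th(1)]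
    by (auto simp: a_def sorts_quotient_sig)
  let ?T = "quotient_sig (Some a)"
  have quot: "is_morph Sg_sum ?T quotient_morph" using is_morph_quotient[OF a] .
  have th_T: "is_morph Sg' ?T th"
    using is_morph_quotient_sig_Some[OF th(1) is_morphD(2)[OF quot]] .
  \<comment> \<open>Redirecting f' to the fresh symbol {} gives a second mediating morphism.\<close>
  define th' where "th' = th\<lparr>fmap := (fmap th)(f' := {})\<rparr>"
  have "{} \<in> ops ?T" "arity ?T {} = a" by (simp_all add: quotient_sig_def)
  then have "is_morph Sg' ?T th'"
    using th_T f' unfolding is_morph_def by (auto simp: th'_def a_def)
  moreover have "morph_eq_on Sg_sum (morph_comp th' copair) quotient_morph"
    using th(2) not_hit by (auto simp: morph_eq_on_def morph_comp_def th'_def)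
  ultimately have "morph_eq_on Sg' th th'"
    using factor_through_copair_unique[OF quot quotient_morph_compat th_T th(2)] by blast
  then have "fmap th f' = fmap th' f'" using f' by (simp add: morph_eq_on_def)
  also have "\<dots> = {}" by (simp add: th'_def)
  finally have "fmap th f' = {}" .
  moreover have "fmap th f' \<in> op_class ` ops Sg_sum"
    using is_morphD(4)[OF th(1) f'] by (simp add: quotient_sig_def)
  ultimately show False using op_class_self by blast
qed

end

section \<open>Amalgamation\<close>

locale amalgamation = sig_pushout Sg Sg0 Sg1 Sg' chi0 chi1 chi0' chi1'
  for Sg :: "('s, 'f, 'l) sig"
    and Sg0 :: "('s0, 'f0, 'l0) sig" and Sg1 :: "('s1, 'f1, 'l1) sig"
    and Sg' :: "('s2, 'f2, 'l2) sig"
    and chi0 :: "('s, 'f, 'l, 's0, 'f0, 'l0) morph"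
    and chi1 :: "('s, 'f, 'l, 's1, 'f1, 'l1) morph"
    and chi0' :: "('s0, 'f0, 'l0, 's2, 'f2, 'l2) morph"
    and chi1' :: "('s1, 'f1, 'l1, 's2, 'f2, 'l2) morph" +
  fixes A0 :: "('s0, 'f0, 'l0, 'u) model" and A1 :: "('s1, 'f1, 'l1, 'u) model"
  assumes model0: "is_model Sg0 A0" and model1: "is_model Sg1 A1"
    and reducts_agree: "reduct Sg chi0 A0 = reduct Sg chi1 A1"
begin

abbreviation "A_sum \<equiv> sum_model A0 A1"

lemma models_agree_along_chi:
  "s \<in> sorts Sg \<Longrightarrow>
     car A0 (smap chi0 s) = car A1 (smap chi1 s) \<and> rels A0 (smap chi0 s) = rels A1 (smap chi1 s) \<and>
     kstar A0 (smap chi0 s) = kstar A1 (smap chi1 s)"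
  "f \<in> ops Sg \<Longrightarrow> opi A0 (fmap chi0 f) = opi A1 (fmap chi1 f)"
  "l \<in> labels Sg \<Longrightarrow> lrel A0 (lmap chi0 l) = lrel A1 (lmap chi1 l)"
  using agrees_along_reduct[OF model0 is_morph_chi(1)] agrees_along_reduct[OF model1 is_morph_chi(2)]
  unfolding reducts_agree agrees_along_def by simp_all

sublocale coloured_pushout Sg Sg0 Sg1 Sg' chi0 chi1 chi0' chi1'
  "\<lambda>x. (car A_sum x, rels A_sum x, kstar A_sum x)" "opi A_sum" "lrel A_sum"
  by unfold_locales (use models_agree_along_chi in \<open>simp_all add: sum_model_def\<close>)

text \<open>Sorts of Sg' outside the image of chi0' and chi1' get an empty carrier, whose only
  relation is the empty one.\<close>
definition amalgam :: "('s2, 'f2, 'l2, 'u) model" where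
  "amalgam =
     \<lparr>car = (\<lambda>s'. if s' \<in> smap copair ` sorts Sg_sum
                 then car A_sum (inv_into (sorts Sg_sum) (smap copair) s') else {}),
      opi = (\<lambda>f'. if f' \<in> fmap copair ` ops Sg_sum
                 then opi A_sum (inv_into (ops Sg_sum) (fmap copair) f') else (\<lambda>xs. undefined)),
      lrel = (\<lambda>l'. if l' \<in> lmap copair ` labels Sg_sum
                 then lrel A_sum (inv_into (labels Sg_sum) (lmap copair) l') else {}),
      rels = (\<lambda>s'. if s' \<in> smap copair ` sorts Sg_sum
                 then rels A_sum (inv_into (sorts Sg_sum) (smap copair) s')
                 else if s' \<in> sorts Sg' then {{}} else {}),
      kstar = (\<lambda>s'. if s' \<in> smap copair ` sorts Sg_sum
                 then kstar A_sum (inv_into (sorts Sg_sum) (smap copair) s')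
                 else if s' \<in> sorts Sg' then (\<lambda>r. if r = {} then {} else undefined) else (\<lambda>r. undefined))\<rparr>"

lemma amalgam_agrees_along_copair: "agrees_along Sg_sum copair amalgam A_sum"
  unfolding agrees_along_def
proof (intro conjI ballI)
  fix x assume x: "x \<in> sorts Sg_sum"
  let ?y = "inv_into (sorts Sg_sum) (smap copair) (smap copair x)"
  have "?y \<in> sorts Sg_sum" "smap copair ?y = smap copair x"
    using x by (simp_all add: inv_into_into f_inv_into_f)
  then have "(car A_sum ?y, rels A_sum ?y, kstar A_sum ?y) = (car A_sum x, rels A_sum x, kstar A_sum x)"
    using colS_eq_if_copair_eq x by blast
  then show "car amalgam (smap copair x) = car A_sum x" "rels amalgam (smap copair x) = rels A_sum x"
    "kstar amalgam (smap copair x) = kstar A_sum x"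
    using x by (simp_all add: amalgam_def)
next
  fix x assume x: "x \<in> ops Sg_sum"
  let ?y = "inv_into (ops Sg_sum) (fmap copair) (fmap copair x)"
  have "?y \<in> ops Sg_sum" "fmap copair ?y = fmap copair x"
    using x by (simp_all add: inv_into_into f_inv_into_f)
  then have "opi A_sum ?y = opi A_sum x" using colF_eq_if_copair_eq x by blast
  then show "opi amalgam (fmap copair x) = opi A_sum x" using x by (simp add: amalgam_def)
next
  fix x assume x: "x \<in> labels Sg_sum"
  let ?y = "inv_into (labels Sg_sum) (lmap copair) (lmap copair x)"
  have "?y \<in> labels Sg_sum" "lmap copair ?y = lmap copair x"
    using x by (simp_all add: inv_into_into f_inv_into_f)
  then have "lrel A_sum ?y = lrel A_sum x" using colL_eq_if_copair_eq x by blast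
  then show "lrel amalgam (lmap copair x) = lrel A_sum x" using x by (simp add: amalgam_def)
qed

lemma reduct_amalgam_copair: "reduct Sg_sum copair amalgam = A_sum"
  using reduct_eq_if_agrees_along[OF is_model_sum[OF model0 model1] amalgam_agrees_along_copair] .

lemma reduct_amalgam: "reduct Sg0 chi0' amalgam = A0" "reduct Sg1 chi1' amalgam = A1"
proof -
  have "reduct Sg0 chi0' amalgam = reduct Sg0 inl_morph (reduct Sg_sum copair amalgam)"
    using reduct_comp[OF is_morph_inl[OF wf_sigs(2,3)], of copair amalgam] by (simp add: copair_comp_inl)
  then show "reduct Sg0 chi0' amalgam = A0"
    by (simp add: reduct_amalgam_copair reduct_inl_sum_model[OF model0])
  have "reduct Sg1 chi1' amalgam = reduct Sg1 inr_morph (reduct Sg_sum copair amalgam)"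
    using reduct_comp[OF is_morph_inr[OF wf_sigs(2,3)], of copair amalgam] by (simp add: copair_comp_inr)
  then show "reduct Sg1 chi1' amalgam = A1"
    by (simp add: reduct_amalgam_copair reduct_inr_sum_model[OF model1])
qed

lemma amalgam_is_model: "is_model Sg' amalgam"
proof -
  note copair = is_morph_copair_pushout and along = amalgam_agrees_along_copair
  have A_sum: "is_model Sg_sum A_sum" using is_model_sum[OF model0 model1] .
  have sorts: "relation_kleene_algebra (car amalgam s) (rels amalgam s) (kstar amalgam s)"
    if "s \<in> sorts Sg'" for s
  proof (cases "s \<in> smap copair ` sorts Sg_sum")
    case True
    then obtain x where "x \<in> sorts Sg_sum" "s = smap copair x" by blast
    then show ?thesis using A_sum along unfolding is_model_iff agrees_along_def by simp
  next
    case False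
    then show ?thesis using that relation_kleene_algebra_empty by (simp add: amalgam_def)
  qed
  have ops: "op_well_sorted Sg' amalgam f" if f: "f \<in> ops Sg'" for f
  proof -
    obtain x where "x \<in> ops Sg_sum" "f = fmap copair x" using ops_in_copair_image[OF f] by blast
    then show ?thesis
      using op_well_sorted_along[OF copair along] A_sum unfolding is_model_iff by blast
  qed
  have labels: "label_well_sorted Sg' amalgam l" if "l \<in> labels Sg'" for l
  proof (cases "l \<in> lmap copair ` labels Sg_sum")
    case True
    then obtain x where "x \<in> labels Sg_sum" "l = lmap copair x" by blast
    then show ?thesis
      using label_well_sorted_along[OF copair along] A_sum unfolding is_model_iff by blast
  next
    case False
    have "{} \<in> rels amalgam (lsort Sg' l)"
      using sorts[OF wf_sigD(3)[OF wf_sigs(4) that]] by (simp add: relation_kleene_algebra_def)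
    then show ?thesis using False by (simp add: label_well_sorted_def amalgam_def)
  qed
  have "car amalgam s = {} \<and> rels amalgam s = {} \<and> kstar amalgam s = (\<lambda>r. undefined)"
    if "s \<notin> sorts Sg'" for s
    using that is_morphD(3)[OF copair] by (auto simp: amalgam_def)
  moreover have "opi amalgam f = (\<lambda>xs. undefined)" if "f \<notin> ops Sg'" for f
    using that is_morphD(4)[OF copair] by (auto simp: amalgam_def)
  moreover have "lrel amalgam l = {}" if "l \<notin> labels Sg'" for l
    using that is_morphD(6)[OF copair] by (auto simp: amalgam_def)
  ultimately show ?thesis
    using wf_sigs(4) sorts ops labels unfolding is_model_iff by blast
qed

end

theorem lemma29:
  fixes Sg :: "('s, 'f, 'l) sig"
    and Sg0 :: "('s0, 'f0, 'l0) sig" and Sg1 :: "('s1, 'f1, 'l1) sig"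
    and Sg' :: "('s2, 'f2, 'l2) sig"
    and chi0 :: "('s, 'f, 'l, 's0, 'f0, 'l0) morph"
    and chi1 :: "('s, 'f, 'l, 's1, 'f1, 'l1) morph"
    and chi0' :: "('s0, 'f0, 'l0, 's2, 'f2, 'l2) morph"
    and chi1' :: "('s1, 'f1, 'l1, 's2, 'f2, 'l2) morph"
    and A0 :: "('s0, 'f0, 'l0, 'u) model"
    and A1 :: "('s1, 'f1, 'l1, 'u) model"
  assumes "is_pushout Sg Sg0 Sg1 Sg' chi0 chi1 chi0' chi1'"
    and "is_model Sg0 A0"
    and "is_model Sg1 A1"
  shows "reduct Sg chi0 A0 = reduct Sg chi1 A1 \<longleftrightarrow>
         (\<exists>A' :: ('s2, 'f2, 'l2, 'u) model.
            is_model Sg' A' \<and> reduct Sg0 chi0' A' = A0 \<and> reduct Sg1 chi1' A' = A1)"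
proof
  assume "reduct Sg chi0 A0 = reduct Sg chi1 A1"
  then interpret amalgamation Sg Sg0 Sg1 Sg' chi0 chi1 chi0' chi1' A0 A1
    using assms by unfold_locales
  show "\<exists>A'. is_model Sg' A' \<and> reduct Sg0 chi0' A' = A0 \<and> reduct Sg1 chi1' A' = A1"
    using amalgam_is_model reduct_amalgam by blast
next
  interpret sig_pushout Sg Sg0 Sg1 Sg' chi0 chi1 chi0' chi1'
    using assms(1) by unfold_locales
  assume "\<exists>A'. is_model Sg' A' \<and> reduct Sg0 chi0' A' = A0 \<and> reduct Sg1 chi1' A' = A1"
  then show "reduct Sg chi0 A0 = reduct Sg chi1 A1"
    using reducts_of_expansion_agree by blast
qed

end
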